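(* Let $K$ be a CMI on $X_1,\dots,X_n$ in pure form. Then $K\sim\mathrm{can}(K)$.
   Context: Setting: $X_1,\dots,X_n$ jointly distributed discrete random variables with $H(X_i)<\infty$; distribution unspecified. $X_\alpha=(X_i,i\in\alpha)$, $X_\emptyset$ constant. A CMI is $K=(C,\langle Q_1,\dots,Q_k\rangle)$, $k\ge0$, $C\subseteq\{1,\dots,n\}$, $\langle\cdot\rangle$ an unordered multiset of subsets; it is valid (for a given distribution) if $\sum_{i=1}^kH(X_{Q_i}|X_C)-H(X_{Q_1},\dots,X_{Q_k}|X_C)=0$. Empty members may be deleted. $K\sim K'$: for every joint distribution both valid or both invalid. Degenerate CMIs (always valid) are written $(\cdot,\langle\ \rangle)$. $K$ is in pure form if all $Q_i\ne\emptyset$ and $Q_i\cap C=\emptyset$. Canonical form of pure $K$: $\mathbb I_K$ = set of indices lying in at least two members (distinct positions) of the collection if $k\ge2$, $\emptyset$ otherwise; $P_1,\dots,P_t$ the nonempty sets among $Q_i\setminus\mathbb I_K$ (with multiplicity); $\mathrm{can}(K)=(\cdot,\langle\ \rangle)$ if $k\le1$; $(C,\langle\mathbb I_K,\mathbb I_K\rangle)$ if $k\ge2,\mathbb I_K\ne\emptyset,t\le1$; $(C,\langle P_1,\dots,P_t\rangle)$ if $k\ge2,\mathbb I_K=\emptyset$; $(C,\langle\mathbb I_K,\mathbb I_K,P_1,\dots,P_t\rangle)$ if $k\ge2,\mathbb I_K\ne\emptyset,t\ge2$. *)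

theory Defs
  imports "HOL-Probability.Probability_Mass_Function" "HOL-Library.Multiset" "HOL-Analysis.Infinite_Sum"
begin

text \<open>A joint distribution of X_1,...,X_n: a pmf on outcomes \<omega> :: nat \<Rightarrow> nat,
  X_i(\<omega>) = \<omega> i (values relabelled injectively into nat, which preserves entropies).\<close>

type_synonym jdist = "(nat \<Rightarrow> nat) pmf"

definition marg :: "jdist \<Rightarrow> nat set \<Rightarrow> (nat \<Rightarrow> nat) pmf" where
  "marg p \<alpha> = map_pmf (\<lambda>\<omega> i. if i \<in> \<alpha> then \<omega> i else 0) p"

definition ent_summable :: "'a pmf \<Rightarrow> bool" where
  "ent_summable q \<longleftrightarrow> (\<lambda>y. pmf q y * ln (pmf q y)) summable_on UNIV"

definition ent :: "'a pmf \<Rightarrow> real" where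
  "ent q = (\<Sum>\<^sub>\<infinity>y. - (pmf q y * ln (pmf q y)))"

definition H :: "jdist \<Rightarrow> nat set \<Rightarrow> real" where
  "H p \<alpha> = ent (marg p \<alpha>)"

definition Hc :: "jdist \<Rightarrow> nat set \<Rightarrow> nat set \<Rightarrow> real" where
  "Hc p A C = H p (A \<union> C) - H p C"

definition admissible :: "nat \<Rightarrow> jdist \<Rightarrow> bool" where
  "admissible n p \<longleftrightarrow> (\<forall>i\<in>{1..n}. ent_summable (marg p {i}))"

type_synonym cmi = "nat set \<times> nat set multiset"

definition valid :: "jdist \<Rightarrow> cmi \<Rightarrow> bool" where
  "valid p K \<longleftrightarrow> (case K of (C, Qs) \<Rightarrow>
      (\<Sum>Q\<in>#Qs. Hc p Q C) - Hc p (\<Union>(set_mset Qs)) C = 0)"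

definition cmi_equiv :: "nat \<Rightarrow> cmi \<Rightarrow> cmi \<Rightarrow> bool" where
  "cmi_equiv n K K' \<longleftrightarrow> (\<forall>p. admissible n p \<longrightarrow> (valid p K \<longleftrightarrow> valid p K'))"

definition pure_form :: "nat \<Rightarrow> cmi \<Rightarrow> bool" where
  "pure_form n K \<longleftrightarrow> (case K of (C, Qs) \<Rightarrow> C \<subseteq> {1..n} \<and>
      (\<forall>Q\<in>#Qs. Q \<subseteq> {1..n} \<and> Q \<noteq> {} \<and> Q \<inter> C = {}))"

definition II :: "cmi \<Rightarrow> nat set" where
  "II K = (if size (snd K) \<ge> 2
           then {i. size (filter_mset (\<lambda>Q. i \<in> Q) (snd K)) \<ge> 2} else {})"

definition Ps :: "cmi \<Rightarrow> nat set multiset" where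
  "Ps K = filter_mset (\<lambda>P. P \<noteq> {}) (image_mset (\<lambda>Q. Q - II K) (snd K))"

text \<open>The degenerate CMI (\<cdot>, <>) is represented with the empty collection.\<close>
definition degenerate :: cmi where "degenerate = ({}, {#})"

definition can :: "cmi \<Rightarrow> cmi" where
  "can K = (let C = fst K; k = size (snd K); I = II K; P = Ps K; t = size P in
     if k \<le> 1 then degenerate
     else if I \<noteq> {} \<and> t \<le> 1 then (C, {#I, I#})
     else if I = {} then (C, P)
     else (C, {#I, I#} + P))"

end

theory Submission
  imports Defs "HOL-Analysis.Infinite_Set_Sum"
begin

text \<open>Fix \<open>C\<close>. The function \<open>g A = H(X\<^sub>A | X\<^sub>C)\<close> is a polymatroid on \<open>{1..n}\<close>: it vanishes on
  \<open>{}\<close>, is monotone, and is submodular, the last being Shannon's inequality \<open>I(X\<^sub>A; X\<^sub>B | X\<^sub>A\<^sub>\<inter>\<^sub>B) \<ge> 0\<close>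
  (Gibbs' inequality against the conditionally independent coupling). For any polymatroid and
  sets \<open>Q\<^sub>1, ..., Q\<^sub>k\<close> with \<open>I\<close> the elements lying in at least two of them, adding the \<open>Q\<^sub>i\<close> one at a
  time and using submodularity gives \<open>g(\<Union>Q\<^sub>i) + g(I) \<le> \<Sum> g(Q\<^sub>i)\<close>. Hence validity of \<open>K\<close>, i.e.
  \<open>\<Sum> g(Q\<^sub>i) = g(\<Union>Q\<^sub>i)\<close>, forces \<open>g(I) = 0\<close>; then \<open>g(Q) = g(Q - I)\<close> for every \<open>Q\<close>, so \<open>K\<close> is valid
  iff \<open>g(I) = 0\<close> and the private parts \<open>Q\<^sub>i - I\<close> form a valid CMI. Each case of \<open>can(K)\<close> is valid
  under exactly the same condition.\<close>

section \<open>Entropy with values in [0, \<infinity>]\<close>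

text \<open>Working in \<open>ennreal\<close> lets the Shannon inequalities be proved before the entropies are
  known to be finite, which they are for marginals of admissible distributions.\<close>

definition nn_entropy :: "'a pmf \<Rightarrow> ennreal" where
  "nn_entropy q = (\<integral>\<^sup>+ y. ennreal (- ln (pmf q y)) \<partial>measure_pmf q)"

lemma neg_ln_pmf_nonneg: "0 \<le> - ln (pmf q y)"
  by (cases "pmf q y = 0") (auto simp: ln_le_zero_iff pmf_le_1)

lemma pmf_mult_ln_pmf_nonpos: "pmf q y * ln (pmf q y) \<le> 0"
  using neg_ln_pmf_nonneg[of q y] by (intro mult_nonneg_nonpos) auto

lemma nn_entropy_count_space:
  "nn_entropy q = (\<integral>\<^sup>+ y. ennreal (- (pmf q y * ln (pmf q y))) \<partial>count_space UNIV)"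
  unfolding nn_entropy_def nn_integral_measure_pmf
  by (intro nn_integral_cong) (simp add: ennreal_mult'[symmetric] neg_ln_pmf_nonneg)

lemma ent_summable_iff_nn_entropy_finite: "ent_summable q \<longleftrightarrow> nn_entropy q \<noteq> \<infinity>"
proof -
  let ?g = "\<lambda>y. pmf q y * ln (pmf q y)"
  have abs_g: "\<bar>?g y\<bar> = - ?g y" for y
    using pmf_mult_ln_pmf_nonpos[of q y] by simp
  have "ent_summable q \<longleftrightarrow> (\<lambda>y. norm (?g y)) summable_on UNIV"
    unfolding ent_summable_def by (rule summable_on_iff_abs_summable_on_real)
  also have "\<dots> \<longleftrightarrow> integrable (count_space UNIV) ?g"
    using abs_summable_equivalent[of ?g UNIV] by (simp add: Infinite_Set_Sum.abs_summable_on_def)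
  also have "\<dots> \<longleftrightarrow> nn_entropy q < \<infinity>"
    by (simp add: integrable_iff_bounded nn_entropy_count_space abs_g)
  finally show ?thesis by (simp add: top.not_eq_extremum)
qed

lemma ent_eq_enn2real_nn_entropy:
  assumes "nn_entropy q \<noteq> \<infinity>"
  shows "ent q = enn2real (nn_entropy q)"
proof -
  let ?f = "\<lambda>y. - (pmf q y * ln (pmf q y))"
  have f_nonneg: "0 \<le> ?f y" for y
    using pmf_mult_ln_pmf_nonpos[of q y] by linarith
  have finite: "(\<integral>\<^sup>+ y. ennreal (?f y) \<partial>count_space UNIV) \<noteq> \<infinity>"
    using assms unfolding nn_entropy_count_space .
  then have "integrable (count_space UNIV) ?f"
    using f_nonneg by (intro integrableI_bounded) (simp_all add: top.not_eq_extremum)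
  then have "ent q = infsetsum ?f UNIV"
    unfolding ent_def by (simp add: infsetsum_infsum Infinite_Set_Sum.abs_summable_on_def)
  also have "\<dots> = enn2real (nn_entropy q)"
    unfolding nn_entropy_count_space using finite f_nonneg by (rule infsetsum_conv_nn_integral)
  finally show ?thesis .
qed

lemma pmf_le_pmf_map_pmf: "pmf q y \<le> pmf (map_pmf \<phi> q) (\<phi> y)"
proof -
  have "pmf q y = measure (measure_pmf q) {y}" by (simp add: measure_pmf_single)
  also have "\<dots> \<le> measure (measure_pmf q) (\<phi> -` {\<phi> y})"
    by (rule measure_pmf.finite_measure_mono) auto
  also have "\<dots> = pmf (map_pmf \<phi> q) (\<phi> y)" by (simp add: pmf_map)
  finally show ?thesis .
qed

lemma nn_entropy_map_pmf_le: "nn_entropy (map_pmf \<phi> q) \<le> nn_entropy q"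
  unfolding nn_entropy_def nn_integral_map_pmf
proof (intro nn_integral_mono_AE, unfold AE_measure_pmf_iff, intro ballI ennreal_leI)
  fix y assume "y \<in> set_pmf q"
  then have "0 < pmf q y" by (simp add: pmf_positive)
  then show "- ln (pmf (map_pmf \<phi> q) (\<phi> y)) \<le> - ln (pmf q y)"
    using pmf_le_pmf_map_pmf[of q y \<phi>] by simp
qed

lemma ln_gibbs_pointwise:
  fixes a b :: real
  assumes "0 < a" "0 < b"
  shows "a * (- ln a) + a \<le> a * (- ln b) + b"
proof -
  have "a * ln (b / a) \<le> a * (b / a - 1)"
    using assms by (intro mult_left_mono ln_le_minus_one) auto
  also have "a * (b / a - 1) = b - a" using assms by (simp add: field_simps)
  finally show ?thesis using assms by (simp add: ln_div algebra_simps)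
qed

lemma nn_integral_pmf_UNIV: "(\<integral>\<^sup>+ y. ennreal (pmf q y) \<partial>count_space UNIV) = 1"
  by (simp add: nn_integral_pmf measure_pmf.emeasure_space_1[simplified])

lemma nn_entropy_le_cross_entropy:
  assumes r: "\<And>y. y \<in> set_pmf q \<Longrightarrow> 0 < r y \<and> r y \<le> 1"
    and r_total: "(\<integral>\<^sup>+ y. indicator (set_pmf q) y * ennreal (r y) \<partial>count_space UNIV) \<le> 1"
  shows "nn_entropy q \<le> (\<integral>\<^sup>+ y. ennreal (- ln (r y)) \<partial>measure_pmf q)"
proof -
  let ?CE = "\<integral>\<^sup>+ y. ennreal (- ln (r y)) \<partial>measure_pmf q"
  have pointwise: "ennreal (pmf q y) * ennreal (- ln (pmf q y)) + ennreal (pmf q y)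
      \<le> ennreal (pmf q y) * ennreal (- ln (r y)) + indicator (set_pmf q) y * ennreal (r y)" for y
  proof (cases "y \<in> set_pmf q")
    case True
    have q: "0 < pmf q y" using True by (simp add: pmf_positive)
    have "0 < r y" "r y \<le> 1" using r[OF True] by auto
    have "ennreal (pmf q y * (- ln (pmf q y)) + pmf q y) \<le> ennreal (pmf q y * (- ln (r y)) + r y)"
      using ln_gibbs_pointwise[OF q \<open>0 < r y\<close>] by (rule ennreal_leI)
    moreover have "0 \<le> - ln (r y)" "0 \<le> pmf q y * (- ln (pmf q y))" "0 \<le> pmf q y * (- ln (r y))"
      using q \<open>0 < r y\<close> \<open>r y \<le> 1\<close> neg_ln_pmf_nonneg[of q y] by (simp_all add: mult_nonneg_nonpos)
    ultimately show ?thesis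
      using q \<open>0 < r y\<close> True neg_ln_pmf_nonneg[of q y]
      by (simp only: ennreal_mult[symmetric] ennreal_plus[symmetric] less_imp_le indicator_simps mult_1)
  qed (simp add: set_pmf_iff)
  have "nn_entropy q + 1
      = (\<integral>\<^sup>+ y. ennreal (pmf q y) * ennreal (- ln (pmf q y)) + ennreal (pmf q y) \<partial>count_space UNIV)"
    unfolding nn_entropy_def nn_integral_measure_pmf nn_integral_pmf_UNIV[of q, symmetric]
    by (subst nn_integral_add) auto
  also have "\<dots> \<le> (\<integral>\<^sup>+ y. ennreal (pmf q y) * ennreal (- ln (r y))
      + indicator (set_pmf q) y * ennreal (r y) \<partial>count_space UNIV)"
    by (intro nn_integral_mono pointwise)
  also have "\<dots> = ?CE + (\<integral>\<^sup>+ y. indicator (set_pmf q) y * ennreal (r y) \<partial>count_space UNIV)"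
    unfolding nn_integral_measure_pmf by (subst nn_integral_add) auto
  also have "\<dots> \<le> ?CE + 1" using r_total by (intro add_left_mono)
  finally show ?thesis by (simp add: add.commute ennreal_add_left_cancel_le)
qed

lemma nn_integral_count_space_fibers:
  "(\<integral>\<^sup>+ y. F y \<partial>count_space UNIV)
   = (\<integral>\<^sup>+ a. \<integral>\<^sup>+ y. (if \<alpha> y = a then F y else 0) \<partial>count_space UNIV \<partial>count_space UNIV)"
proof -
  let ?G = "\<lambda>(a, y). if \<alpha> y = a then F y else 0"
  have "(\<integral>\<^sup>+ a. \<integral>\<^sup>+ y. ?G (a, y) \<partial>count_space UNIV \<partial>count_space UNIV)
      = (\<integral>\<^sup>+ y. \<integral>\<^sup>+ a. ?G (a, y) \<partial>count_space UNIV \<partial>count_space UNIV)"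
    by (simp only: nn_integral_fst_count_space nn_integral_snd_count_space)
  also have "\<dots> = (\<integral>\<^sup>+ y. F y \<partial>count_space UNIV)"
  proof (rule nn_integral_cong)
    fix y
    have "(\<integral>\<^sup>+ a. ?G (a, y) \<partial>count_space UNIV) = (\<integral>\<^sup>+ a. F y * indicator {\<alpha> y} a \<partial>count_space UNIV)"
      by (rule nn_integral_cong) (auto split: split_indicator)
    then show "(\<integral>\<^sup>+ a. ?G (a, y) \<partial>count_space UNIV) = F y"
      by (simp add: nn_integral_cmult_indicator)
  qed
  finally show ?thesis by simp
qed

lemma nn_integral_pmf_inj_image_le:
  assumes "inj_on \<beta> T" "\<beta> ` T \<subseteq> \<epsilon> -` {d}"
  shows "(\<integral>\<^sup>+ y. ennreal (pmf q (\<beta> y)) \<partial>count_space T) \<le> pmf (map_pmf \<epsilon> q) d"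
proof -
  have "(\<integral>\<^sup>+ y. ennreal (pmf q (\<beta> y)) \<partial>count_space T)
      = (\<integral>\<^sup>+ b. ennreal (pmf q b) \<partial>count_space (\<beta> ` T))"
    using assms(1) by (intro nn_integral_bij_count_space inj_on_imp_bij_betw)
  also have "\<dots> \<le> (\<integral>\<^sup>+ b. ennreal (pmf q b) \<partial>count_space (\<epsilon> -` {d}))"
    using assms(2) by (subst (1 2) nn_integral_count_space_indicator)
      (auto intro!: nn_integral_mono simp: image_subset_iff split: split_indicator)
  also have "\<dots> = pmf (map_pmf \<epsilon> q) d"
    by (simp add: nn_integral_pmf pmf_map measure_pmf.emeasure_eq_measure)
  finally show ?thesis .
qed

text \<open>The weight of \<open>y\<close> under the coupling of the laws of \<open>\<alpha>\<close> and \<open>\<beta>\<close> that makes them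
  conditionally independent given \<open>\<delta> \<circ> \<alpha>\<close>.\<close>

definition cond_indep_weight :: "'a pmf \<Rightarrow> ('a \<Rightarrow> 'b) \<Rightarrow> ('a \<Rightarrow> 'c) \<Rightarrow> ('b \<Rightarrow> 'd) \<Rightarrow> 'a \<Rightarrow> real" where
  "cond_indep_weight q \<alpha> \<beta> \<delta> y =
     pmf (map_pmf \<alpha> q) (\<alpha> y) * pmf (map_pmf \<beta> q) (\<beta> y) / pmf (map_pmf \<delta> (map_pmf \<alpha> q)) (\<delta> (\<alpha> y))"

context
  fixes q :: "'a pmf" and \<alpha> :: "'a \<Rightarrow> 'b" and \<beta> :: "'a \<Rightarrow> 'c" and \<delta> :: "'b \<Rightarrow> 'd" and \<epsilon> :: "'c \<Rightarrow> 'd"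
  assumes common_coarsening: "\<And>y. \<delta> (\<alpha> y) = \<epsilon> (\<beta> y)"
begin

private abbreviation "qa \<equiv> map_pmf \<alpha> q"
private abbreviation "qb \<equiv> map_pmf \<beta> q"
private abbreviation "qd \<equiv> map_pmf \<delta> (map_pmf \<alpha> q)"
private abbreviation "w \<equiv> cond_indep_weight q \<alpha> \<beta> \<delta>"

private lemma qd_eq_map_qb: "qd = map_pmf \<epsilon> qb"
  by (simp add: map_pmf_comp common_coarsening)

private lemma marginals_pos:
  assumes "y \<in> set_pmf q"
  shows "0 < pmf qa (\<alpha> y)" "0 < pmf qb (\<beta> y)" "pmf qb (\<beta> y) \<le> pmf qd (\<delta> (\<alpha> y))"
proof -
  have "0 < pmf q y" using assms by (simp add: pmf_positive)
  then show "0 < pmf qa (\<alpha> y)" "0 < pmf qb (\<beta> y)"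
    using pmf_le_pmf_map_pmf[of q y \<alpha>] pmf_le_pmf_map_pmf[of q y \<beta>] by linarith+
  show "pmf qb (\<beta> y) \<le> pmf qd (\<delta> (\<alpha> y))"
    unfolding qd_eq_map_qb common_coarsening by (rule pmf_le_pmf_map_pmf)
qed

lemma cond_indep_weight_bounds:
  assumes "y \<in> set_pmf q"
  shows "0 < w y \<and> w y \<le> 1"
proof -
  note pos = marginals_pos[OF assms]
  have "w y = pmf qa (\<alpha> y) * (pmf qb (\<beta> y) / pmf qd (\<delta> (\<alpha> y)))"
    unfolding cond_indep_weight_def by simp
  also have "\<dots> \<le> 1 * 1"
    using pos by (intro mult_mono) (simp_all add: pmf_le_1)
  finally show ?thesis
    using pos unfolding cond_indep_weight_def by simp
qed

lemma neg_ln_cond_indep_weight: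
  assumes "y \<in> set_pmf q"
  shows "- ln (pmf qa (\<alpha> y)) + - ln (pmf qb (\<beta> y)) = - ln (w y) + - ln (pmf qd (\<delta> (\<alpha> y)))"
  using marginals_pos[OF assms] unfolding cond_indep_weight_def by (simp add: ln_div ln_mult)

lemma cond_indep_weight_fiber_le:
  assumes inj: "inj_on (\<lambda>y. (\<alpha> y, \<beta> y)) (set_pmf q)"
  shows "(\<integral>\<^sup>+ y. (if \<alpha> y = a then indicator (set_pmf q) y * ennreal (w y) else 0) \<partial>count_space UNIV)
      \<le> pmf qa a"
proof -
  define T where "T = {y \<in> set_pmf q. \<alpha> y = a}"
  define c where "c = pmf qa a / pmf qd (\<delta> a)"
  have "(\<integral>\<^sup>+ y. (if \<alpha> y = a then indicator (set_pmf q) y * ennreal (w y) else 0) \<partial>count_space UNIV)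
      = (\<integral>\<^sup>+ y. ennreal c * ennreal (pmf qb (\<beta> y)) \<partial>count_space T)"
    by (subst (2) nn_integral_count_space_indicator, simp, intro nn_integral_cong)
      (auto simp: T_def c_def cond_indep_weight_def ennreal_mult[symmetric] split: split_indicator)
  also have "\<dots> = ennreal c * (\<integral>\<^sup>+ y. ennreal (pmf qb (\<beta> y)) \<partial>count_space T)"
    by (rule nn_integral_cmult) simp
  also have "\<dots> \<le> ennreal c * pmf qd (\<delta> a)"
    unfolding qd_eq_map_qb
  proof (intro mult_left_mono nn_integral_pmf_inj_image_le)
    show "inj_on \<beta> T"
      using inj unfolding T_def inj_on_def by auto
  qed (auto simp: T_def common_coarsening[symmetric])
  also have "\<dots> \<le> pmf qa a"
    unfolding c_def by (cases "pmf qd (\<delta> a) = 0") (simp_all add: ennreal_mult[symmetric])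
  finally show ?thesis .
qed

lemma cond_indep_weight_total_le_1:
  assumes "inj_on (\<lambda>y. (\<alpha> y, \<beta> y)) (set_pmf q)"
  shows "(\<integral>\<^sup>+ y. indicator (set_pmf q) y * ennreal (w y) \<partial>count_space UNIV) \<le> 1"
proof -
  have "(\<integral>\<^sup>+ y. indicator (set_pmf q) y * ennreal (w y) \<partial>count_space UNIV)
      = (\<integral>\<^sup>+ a. \<integral>\<^sup>+ y. (if \<alpha> y = a then indicator (set_pmf q) y * ennreal (w y) else 0)
           \<partial>count_space UNIV \<partial>count_space UNIV)"
    by (rule nn_integral_count_space_fibers)
  also have "\<dots> \<le> (\<integral>\<^sup>+ a. ennreal (pmf qa a) \<partial>count_space UNIV)"
    by (intro nn_integral_mono cond_indep_weight_fiber_le[OF assms])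
  also have "\<dots> = 1" by (rule nn_integral_pmf_UNIV)
  finally show ?thesis .
qed

text \<open>Shannon's inequality \<open>I(\<alpha>; \<beta> | \<delta> \<circ> \<alpha>) \<ge> 0\<close>, for \<open>y\<close> determined by \<open>(\<alpha> y, \<beta> y)\<close>.\<close>

theorem nn_entropy_submodular:
  assumes "inj_on (\<lambda>y. (\<alpha> y, \<beta> y)) (set_pmf q)"
  shows "nn_entropy q + nn_entropy qd \<le> nn_entropy qa + nn_entropy qb"
proof -
  have "nn_entropy qa + nn_entropy qb
      = (\<integral>\<^sup>+ y. ennreal (- ln (pmf qa (\<alpha> y))) + ennreal (- ln (pmf qb (\<beta> y))) \<partial>measure_pmf q)"
    unfolding nn_entropy_def nn_integral_map_pmf by (subst nn_integral_add) auto
  also have "\<dots> = (\<integral>\<^sup>+ y. ennreal (- ln (w y)) + ennreal (- ln (pmf qd (\<delta> (\<alpha> y)))) \<partial>measure_pmf q)"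
  proof (intro nn_integral_cong_AE, unfold AE_measure_pmf_iff, intro ballI)
    fix y assume y: "y \<in> set_pmf q"
    have "ennreal (- ln (pmf qa (\<alpha> y))) + ennreal (- ln (pmf qb (\<beta> y)))
        = ennreal (- ln (pmf qa (\<alpha> y)) + - ln (pmf qb (\<beta> y)))"
      by (rule ennreal_plus[symmetric]) (rule neg_ln_pmf_nonneg)+
    also have "\<dots> = ennreal (- ln (w y) + - ln (pmf qd (\<delta> (\<alpha> y))))"
      by (simp only: neg_ln_cond_indep_weight[OF y])
    also have "\<dots> = ennreal (- ln (w y)) + ennreal (- ln (pmf qd (\<delta> (\<alpha> y))))"
      using cond_indep_weight_bounds[OF y] by (intro ennreal_plus neg_ln_pmf_nonneg) simp
    finally show "ennreal (- ln (pmf qa (\<alpha> y))) + ennreal (- ln (pmf qb (\<beta> y)))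
        = ennreal (- ln (w y)) + ennreal (- ln (pmf qd (\<delta> (\<alpha> y))))" .
  qed
  also have "\<dots> = (\<integral>\<^sup>+ y. ennreal (- ln (w y)) \<partial>measure_pmf q) + nn_entropy qd"
    unfolding nn_entropy_def nn_integral_map_pmf by (subst nn_integral_add) auto
  also have "\<dots> \<ge> nn_entropy q + nn_entropy qd"
    using cond_indep_weight_bounds cond_indep_weight_total_le_1[OF assms]
    by (intro add_right_mono nn_entropy_le_cross_entropy)
  finally show ?thesis .
qed

end

section \<open>Entropies of marginals\<close>

definition zero_outside :: "nat set \<Rightarrow> (nat \<Rightarrow> nat) \<Rightarrow> nat \<Rightarrow> nat" where
  "zero_outside A \<omega> = (\<lambda>i. if i \<in> A then \<omega> i else 0)"

lemma marg_eq_map_zero_outside: "marg p A = map_pmf (zero_outside A) p"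
  unfolding marg_def zero_outside_def ..

lemma zero_outside_zero_outside: "zero_outside A (zero_outside B \<omega>) = zero_outside (A \<inter> B) \<omega>"
  unfolding zero_outside_def by auto

lemma map_zero_outside_marg: "A \<subseteq> B \<Longrightarrow> map_pmf (zero_outside A) (marg p B) = marg p A"
  unfolding marg_eq_map_zero_outside map_pmf_comp zero_outside_zero_outside
  by (simp add: Int_absorb2)

lemma nn_entropy_marg_mono: "A \<subseteq> B \<Longrightarrow> nn_entropy (marg p A) \<le> nn_entropy (marg p B)"
  using nn_entropy_map_pmf_le map_zero_outside_marg by metis

lemma nn_entropy_marg_empty: "nn_entropy (marg p {}) = 0"
proof -
  have "marg p {} = return_pmf (\<lambda>i. 0)" unfolding marg_def by (simp add: map_pmf_const)
  then show ?thesis by (simp add: nn_entropy_def)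
qed

lemma nn_entropy_marg_submodular:
  "nn_entropy (marg p (A \<union> B)) + nn_entropy (marg p (A \<inter> B)) \<le> nn_entropy (marg p A) + nn_entropy (marg p B)"
proof -
  let ?q = "marg p (A \<union> B)"
  have "inj_on (\<lambda>\<omega>. (zero_outside A \<omega>, zero_outside B \<omega>)) (set_pmf ?q)"
    by (auto simp: inj_on_def marg_eq_map_zero_outside zero_outside_def fun_eq_iff)
  then have "nn_entropy ?q + nn_entropy (map_pmf (zero_outside (A \<inter> B)) (map_pmf (zero_outside A) ?q))
      \<le> nn_entropy (map_pmf (zero_outside A) ?q) + nn_entropy (map_pmf (zero_outside B) ?q)"
    by (intro nn_entropy_submodular[where \<epsilon> = "zero_outside (A \<inter> B)"])
      (simp add: zero_outside_zero_outside Int_commute Int_left_commute)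
  then show ?thesis
    by (simp add: map_zero_outside_marg)
qed

lemma nn_entropy_marg_finite:
  assumes adm: "admissible n p" and A: "A \<subseteq> {1..n}"
  shows "nn_entropy (marg p A) \<noteq> \<infinity>"
proof -
  have "finite A" using A finite_subset by blast
  then show ?thesis using A
  proof (induction A rule: finite_induct)
    case (insert i A)
    have "nn_entropy (marg p (insert i A)) \<le> nn_entropy (marg p ({i} \<union> A)) + nn_entropy (marg p ({i} \<inter> A))"
      by simp
    also have "\<dots> \<le> nn_entropy (marg p {i}) + nn_entropy (marg p A)"
      by (rule nn_entropy_marg_submodular)
    finally show ?case
      using adm insert by (auto simp: admissible_def ent_summable_iff_nn_entropy_finite top_unique ennreal_add_eq_top)
  qed (simp add: nn_entropy_marg_empty)
qed

lemma H_eq_enn2real: "admissible n p \<Longrightarrow> A \<subseteq> {1..n} \<Longrightarrow> H p A = enn2real (nn_entropy (marg p A))"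
  unfolding H_def using ent_eq_enn2real_nn_entropy nn_entropy_marg_finite by blast

section \<open>Polymatroids\<close>

definition polymatroid :: "'a set \<Rightarrow> ('a set \<Rightarrow> real) \<Rightarrow> bool" where
  "polymatroid V g \<longleftrightarrow> g {} = 0 \<and> (\<forall>A B. A \<subseteq> B \<longrightarrow> B \<subseteq> V \<longrightarrow> g A \<le> g B)
     \<and> (\<forall>A B. A \<subseteq> V \<longrightarrow> B \<subseteq> V \<longrightarrow> g (A \<union> B) + g (A \<inter> B) \<le> g A + g B)"

lemma polymatroid_empty: "polymatroid V g \<Longrightarrow> g {} = 0"
  unfolding polymatroid_def by blast

lemma polymatroid_mono: "polymatroid V g \<Longrightarrow> A \<subseteq> B \<Longrightarrow> B \<subseteq> V \<Longrightarrow> g A \<le> g B"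
  unfolding polymatroid_def by blast

lemma polymatroid_submodular:
  "polymatroid V g \<Longrightarrow> A \<subseteq> V \<Longrightarrow> B \<subseteq> V \<Longrightarrow> g (A \<union> B) + g (A \<inter> B) \<le> g A + g B"
  unfolding polymatroid_def by blast

lemma polymatroid_nonneg: "polymatroid V g \<Longrightarrow> A \<subseteq> V \<Longrightarrow> 0 \<le> g A"
  using polymatroid_mono[of V g "{}" A] polymatroid_empty[of V g] by auto

lemma polymatroid_subadditive:
  assumes "polymatroid V g" "A \<subseteq> V" "B \<subseteq> V"
  shows "g (A \<union> B) \<le> g A + g B"
proof -
  have "0 \<le> g (A \<inter> B)" using assms(2) by (intro polymatroid_nonneg[OF assms(1)]) blast
  then show ?thesis using polymatroid_submodular[OF assms] by linarith
qed

lemma polymatroid_Un_null: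
  assumes "polymatroid V g" "I \<subseteq> V" "g I = 0" "A \<subseteq> V"
  shows "g (A \<union> I) = g A"
  using polymatroid_subadditive[OF assms(1,4,2)] polymatroid_mono[OF assms(1), of A "A \<union> I"] assms
  by auto

lemma polymatroid_contract:
  assumes g: "polymatroid V g" and C: "C \<subseteq> V"
  shows "polymatroid V (\<lambda>A. g (A \<union> C) - g C)"
  unfolding polymatroid_def
proof (intro conjI allI impI)
  fix A B assume "A \<subseteq> B" "B \<subseteq> V"
  then show "g (A \<union> C) - g C \<le> g (B \<union> C) - g C"
    using polymatroid_mono[OF g, of "A \<union> C" "B \<union> C"] C by auto
next
  fix A B assume "A \<subseteq> V" "B \<subseteq> V"
  moreover have "A \<union> B \<union> C = (A \<union> C) \<union> (B \<union> C)" "A \<inter> B \<union> C = (A \<union> C) \<inter> (B \<union> C)"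
    by auto
  ultimately show "g (A \<union> B \<union> C) - g C + (g (A \<inter> B \<union> C) - g C) \<le> g (A \<union> C) - g C + (g (B \<union> C) - g C)"
    using polymatroid_submodular[OF g, of "A \<union> C" "B \<union> C"] C by auto
qed simp

lemma polymatroid_H:
  assumes adm: "admissible n p"
  shows "polymatroid {1..n} (H p)"
  unfolding polymatroid_def
proof (intro conjI allI impI)
  show "H p {} = 0"
    using ent_eq_enn2real_nn_entropy[of "marg p {}"] by (simp add: H_def nn_entropy_marg_empty)
next
  fix A B assume "A \<subseteq> B" "B \<subseteq> {1..n}"
  then show "H p A \<le> H p B"
    using nn_entropy_marg_finite[OF adm] nn_entropy_marg_mono[of A B p]
    by (simp add: H_eq_enn2real[OF adm] enn2real_mono top.not_eq_extremum)
next
  fix A B assume AB: "A \<subseteq> {1..n}" "B \<subseteq> {1..n}"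
  have finite: "nn_entropy (marg p X) < \<infinity>" if "X \<subseteq> {1..n}" for X
    using nn_entropy_marg_finite[OF adm that] by (simp add: top.not_eq_extremum)
  have "enn2real (nn_entropy (marg p (A \<union> B)) + nn_entropy (marg p (A \<inter> B)))
      \<le> enn2real (nn_entropy (marg p A) + nn_entropy (marg p B))"
    using nn_entropy_marg_submodular[of p A B] finite AB by (intro enn2real_mono) auto
  then show "H p (A \<union> B) + H p (A \<inter> B) \<le> H p A + H p B"
    using finite AB by (simp add: H_eq_enn2real[OF adm] enn2real_plus le_infI1)
qed

lemma polymatroid_Hc: "admissible n p \<Longrightarrow> C \<subseteq> {1..n} \<Longrightarrow> polymatroid {1..n} (\<lambda>A. Hc p A C)"
  unfolding Hc_def by (intro polymatroid_contract polymatroid_H)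

section \<open>The canonical form\<close>

definition shared_elements :: "'a set multiset \<Rightarrow> 'a set" where
  "shared_elements Qs = {i. 2 \<le> size (filter_mset (\<lambda>Q. i \<in> Q) Qs)}"

lemma size_filter_mset_mem_pos_iff: "0 < size (filter_mset (\<lambda>Q. i \<in> Q) Qs) \<longleftrightarrow> i \<in> \<Union>(set_mset Qs)"
  by (auto simp: nonempty_has_size[symmetric] filter_mset_eq_mempty_iff)

lemma shared_elements_subset_Union: "shared_elements Qs \<subseteq> \<Union>(set_mset Qs)"
proof
  fix i assume "i \<in> shared_elements Qs"
  then have "0 < size (filter_mset (\<lambda>Q. i \<in> Q) Qs)" by (simp add: shared_elements_def)
  then show "i \<in> \<Union>(set_mset Qs)" by (simp only: size_filter_mset_mem_pos_iff)
qed

lemma shared_elements_subset: "\<forall>Q\<in>#Qs. Q \<subseteq> V \<Longrightarrow> shared_elements Qs \<subseteq> V"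
  using shared_elements_subset_Union[of Qs] by (rule order_trans) blast

lemma shared_elements_add_mset:
  "shared_elements (add_mset Q Qs) = shared_elements Qs \<union> (Q \<inter> \<Union>(set_mset Qs))"
proof -
  have "i \<in> shared_elements (add_mset Q Qs) \<longleftrightarrow> i \<in> shared_elements Qs \<or> i \<in> Q \<inter> \<Union>(set_mset Qs)" for i
  proof (cases "i \<in> Q")
    case True
    then have "i \<in> shared_elements (add_mset Q Qs) \<longleftrightarrow> 0 < size (filter_mset (\<lambda>Q. i \<in> Q) Qs)"
      by (simp add: shared_elements_def Suc_le_eq)
    then show ?thesis
      using True shared_elements_subset_Union[of Qs] by (auto simp only: size_filter_mset_mem_pos_iff)
  qed (simp add: shared_elements_def)
  then show ?thesis by blast
qed

lemma polymatroid_Union_plus_shared_le_sum: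
  assumes g: "polymatroid V g" and Qs: "\<forall>Q\<in>#Qs. Q \<subseteq> V"
  shows "g (\<Union>(set_mset Qs)) + g (shared_elements Qs) \<le> (\<Sum>Q\<in>#Qs. g Q)"
  using Qs
proof (induction Qs)
  case empty
  then show ?case using polymatroid_empty[OF g] by (simp add: shared_elements_def)
next
  case (add Q Qs)
  let ?U = "\<Union>(set_mset Qs)"
  have QV: "Q \<subseteq> V" and UV: "?U \<subseteq> V" using add.prems by auto
  have IH: "g ?U + g (shared_elements Qs) \<le> (\<Sum>Q\<in>#Qs. g Q)" using add by auto
  have "shared_elements Qs \<subseteq> V" using add.prems by (intro shared_elements_subset) simp
  moreover have "Q \<inter> ?U \<subseteq> V" using QV by blast
  ultimately have "g (shared_elements Qs \<union> (Q \<inter> ?U)) \<le> g (shared_elements Qs) + g (Q \<inter> ?U)"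
    by (rule polymatroid_subadditive[OF g])
  moreover have "g (Q \<union> ?U) + g (Q \<inter> ?U) \<le> g Q + g ?U"
    by (rule polymatroid_submodular[OF g QV UV])
  ultimately show ?case
    using IH by (simp add: shared_elements_add_mset)
qed

definition defect :: "('a set \<Rightarrow> real) \<Rightarrow> 'a set multiset \<Rightarrow> real" where
  "defect g Qs = (\<Sum>Q\<in>#Qs. g Q) - g (\<Union>(set_mset Qs))"

lemma defect_nonneg:
  assumes g: "polymatroid V g" and Qs: "\<forall>Q\<in>#Qs. Q \<subseteq> V"
  shows "0 \<le> defect g Qs"
proof -
  have "0 \<le> g (shared_elements Qs)"
    using Qs by (intro polymatroid_nonneg[OF g] shared_elements_subset)
  then show ?thesis
    using polymatroid_Union_plus_shared_le_sum[OF g Qs] unfolding defect_def by linarith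
qed

lemma defect_size_le_1:
  assumes "size M \<le> 1" "g {} = 0"
  shows "defect g M = 0"
proof (cases "size M = 0")
  case False
  with assms(1) obtain Q where "M = {#Q#}"
    using size_1_singleton_mset[of M] by (metis le_neq_implies_less less_one)
  then show ?thesis by (simp add: defect_def)
qed (simp add: defect_def assms(2))

lemma sum_mset_filter_mset_eq:
  assumes "\<And>x. \<not> P x \<Longrightarrow> f x = 0"
  shows "(\<Sum>x\<in>#filter_mset P M. f x) = (\<Sum>x\<in>#M. f x)"
  using assms by (induction M) auto

definition private_parts :: "'a set multiset \<Rightarrow> 'a set multiset" where
  "private_parts Qs = filter_mset (\<lambda>P. P \<noteq> {}) (image_mset (\<lambda>Q. Q - shared_elements Qs) Qs)"

lemma defect_private_parts:
  assumes g: "polymatroid V g" and Qs: "\<forall>Q\<in>#Qs. Q \<subseteq> V" and null: "g (shared_elements Qs) = 0"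
  shows "defect g (private_parts Qs) = defect g Qs"
proof -
  let ?I = "shared_elements Qs" and ?U = "\<Union>(set_mset Qs)"
  have IV: "?I \<subseteq> V" using Qs by (rule shared_elements_subset)
  have remove_null: "g (A - ?I) = g A" if "A \<subseteq> V" for A
  proof -
    have "g (A - ?I) = g (A - ?I \<union> ?I)"
      using that by (intro polymatroid_Un_null[OF g IV null, symmetric]) blast
    also have "\<dots> = g A"
      using polymatroid_Un_null[OF g IV null that] by simp
    finally show ?thesis .
  qed
  have "(\<Sum>P\<in>#private_parts Qs. g P) = (\<Sum>Q\<in>#Qs. g (Q - ?I))"
    unfolding private_parts_def
    by (subst sum_mset_filter_mset_eq) (simp_all add: polymatroid_empty[OF g] multiset.map_comp comp_def)
  also have "\<dots> = (\<Sum>Q\<in>#Qs. g Q)"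
  proof (intro arg_cong[where f = sum_mset] image_mset_cong)
    fix Q assume "Q \<in># Qs"
    then show "g (Q - ?I) = g Q" using Qs by (intro remove_null) simp
  qed
  moreover have "\<Union>(set_mset (private_parts Qs)) = ?U - ?I"
    unfolding private_parts_def by (simp only: set_mset_filter set_image_mset) blast
  moreover have "?U \<subseteq> V" using Qs by blast
  ultimately show ?thesis
    unfolding defect_def using remove_null[of ?U] by simp
qed

lemma defect_eq_0_iff:
  assumes g: "polymatroid V g" and Qs: "\<forall>Q\<in>#Qs. Q \<subseteq> V"
  shows "defect g Qs = 0 \<longleftrightarrow> g (shared_elements Qs) = 0 \<and> defect g (private_parts Qs) = 0"
proof -
  have "0 \<le> g (shared_elements Qs)"
    using Qs by (intro polymatroid_nonneg[OF g] shared_elements_subset)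
  then have "defect g Qs = 0 \<Longrightarrow> g (shared_elements Qs) = 0"
    using polymatroid_Union_plus_shared_le_sum[OF g Qs] unfolding defect_def by linarith
  then show ?thesis
    using defect_private_parts[OF g Qs] by auto
qed

lemma defect_doubled_add_eq_0_iff:
  assumes g: "polymatroid V g" and "I \<subseteq> V" and Rs: "\<forall>P\<in>#Rs. P \<subseteq> V"
  shows "defect g (add_mset I (add_mset I Rs)) = 0 \<longleftrightarrow> g I = 0 \<and> defect g Rs = 0"
proof -
  let ?U = "\<Union>(set_mset Rs)"
  have "?U \<subseteq> V" using Rs by blast
  have decomposition:
    "defect g (add_mset I (add_mset I Rs)) = g I + (g I + g ?U - g (I \<union> ?U)) + defect g Rs"
    unfolding defect_def by simp
  have "g (I \<union> ?U) \<le> g I + g ?U"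
    by (rule polymatroid_subadditive[OF g \<open>I \<subseteq> V\<close> \<open>?U \<subseteq> V\<close>])
  moreover have "0 \<le> g I" by (rule polymatroid_nonneg[OF g \<open>I \<subseteq> V\<close>])
  moreover have "0 \<le> defect g Rs" by (rule defect_nonneg[OF g Rs])
  moreover have "g I = 0 \<Longrightarrow> g (I \<union> ?U) = g ?U"
    using polymatroid_Un_null[OF g \<open>I \<subseteq> V\<close> _ \<open>?U \<subseteq> V\<close>] by (simp add: Un_commute)
  ultimately show ?thesis
    unfolding decomposition by (smt (verit))
qed

lemma valid_iff_defect: "valid p (C, Qs) \<longleftrightarrow> defect (\<lambda>A. Hc p A C) Qs = 0"
  unfolding valid_def defect_def by simp

lemma valid_degenerate: "valid p degenerate"
  unfolding valid_def degenerate_def Hc_def by simp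

lemma can_size_le_1: "size Qs \<le> 1 \<Longrightarrow> can (C, Qs) = degenerate"
  unfolding can_def by simp

lemma can_size_ge_2:
  assumes "2 \<le> size Qs"
  shows "can (C, Qs) = (C,
    (let I = shared_elements Qs; P = private_parts Qs in
     if I \<noteq> {} \<and> size P \<le> 1 then {#I, I#} else if I = {} then P else {#I, I#} + P))"
  using assms unfolding can_def II_def Ps_def private_parts_def shared_elements_def
  by (simp add: Let_def)

lemma defect_can_eq_0_iff:
  assumes g: "polymatroid V g" and Qs: "\<forall>Q\<in>#Qs. Q \<subseteq> V" and "2 \<le> size Qs"
  shows "defect g (snd (can (C, Qs))) = 0
    \<longleftrightarrow> g (shared_elements Qs) = 0 \<and> defect g (private_parts Qs) = 0"
proof -
  let ?I = "shared_elements Qs" and ?P = "private_parts Qs"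
  have IV: "?I \<subseteq> V" using Qs by (rule shared_elements_subset)
  have PV: "\<forall>P\<in>#?P. P \<subseteq> V"
    using Qs unfolding private_parts_def by auto
  have doubled: "defect g (add_mset ?I (add_mset ?I M)) = 0 \<longleftrightarrow> g ?I = 0 \<and> defect g M = 0"
    if "\<forall>P\<in>#M. P \<subseteq> V" for M
    using defect_doubled_add_eq_0_iff[OF g IV that] .
  consider "?I \<noteq> {}" "size ?P \<le> 1" | "?I = {}" | "?I \<noteq> {}" "\<not> size ?P \<le> 1"
    by blast
  then show ?thesis
  proof cases
    case 1
    then show ?thesis
      using doubled[of "{#}"] defect_size_le_1[of ?P g] polymatroid_empty[OF g]
      unfolding defect_def[of g "{#}"]
      by (simp add: can_size_ge_2[OF \<open>2 \<le> size Qs\<close>] Let_def)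
  next
    case 2
    then show ?thesis
      using polymatroid_empty[OF g] by (simp add: can_size_ge_2[OF \<open>2 \<le> size Qs\<close>] Let_def)
  next
    case 3
    then show ?thesis
      using doubled[OF PV] by (simp add: can_size_ge_2[OF \<open>2 \<le> size Qs\<close>] Let_def)
  qed
qed

theorem mainTheorem4:
  fixes n :: nat and K :: cmi
  assumes "pure_form n K"
  shows "cmi_equiv n K (can K)"
  unfolding cmi_equiv_def
proof (intro allI impI)
  fix p assume adm: "admissible n p"
  obtain C Qs where K: "K = (C, Qs)" by (cases K)
  have C: "C \<subseteq> {1..n}" and Qs: "\<forall>Q\<in>#Qs. Q \<subseteq> {1..n}"
    using assms unfolding K pure_form_def by auto
  note g = polymatroid_Hc[OF adm C]
  show "valid p K \<longleftrightarrow> valid p (can K)"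
  proof (cases "size Qs \<le> 1")
    case True
    then show ?thesis
      using defect_size_le_1[of Qs "\<lambda>A. Hc p A C"] polymatroid_empty[OF g]
      by (simp add: K can_size_le_1 valid_iff_defect valid_degenerate)
  next
    case False
    then have "2 \<le> size Qs" by simp
    then have "can K = (C, snd (can K))"
      unfolding K by (simp add: can_size_ge_2)
    then show ?thesis
      using defect_eq_0_iff[OF g Qs] defect_can_eq_0_iff[OF g Qs \<open>2 \<le> size Qs\<close>]
      by (metis K valid_iff_defect)
  qed
qed

end
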